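(* Given $\xi_2\in\mathbb{R}$, write $\xi_2=m+\theta$ with $m\in\mathbb{Z}$, $-\tfrac12\le\theta<\tfrac12$. Let $\eta>1$. Then there is a constant $C_\eta$ such that for all $f\in\mathcal S_\eta(\mathbb{R})$, all $y\ge\tfrac12$ and all $x,\phi\in\mathbb{R}$, $\xi_1\in\mathbb{R}$, $\zeta\in\mathbb{R}$, \[\Big|\Theta_f(x+iy,\phi;\xi,\zeta)-y^{1/4}e\Big(\zeta+\frac{(m-\theta)\xi_1+\theta^2x}{2}\Big)f_\phi(-\theta y^{1/2})\Big|\le C_\eta\,\kappa_\eta(f)\,y^{-(2\eta-1)/4}.\]
   Context: $e(x)=e^{2\pi ix}$, $\xi=(\xi_1,\xi_2)$. For $f:\mathbb{R}\to\mathbb{R}$ and $\phi\in\mathbb{R}$: $f_\phi=f$ if $\phi\equiv0\bmod2\pi$; $f_\phi(w)=e(-1/4)f(-w)$ if $\phi\equiv\pi\bmod2\pi$; otherwise $f_\phi(w)=e(-\sigma_\phi/8)|\sin\phi|^{-1/2}\int_\mathbb{R}e\big(\frac{\frac12(w^2+w'^2)\cos\phi-ww'}{\sin\phi}\big)f(w')dw'$ with $\sigma_\phi=2\nu+1$ for $\nu\pi<\phi<(\nu+1)\pi$, $\nu\in\mathbb{Z}$. $\kappa_\eta(f)=\sup_{w,\phi}|f_\phi(w)|(1+|w|)^\eta$ and $\mathcal S_\eta(\mathbb{R})=\{f:\mathbb{R}\to\mathbb{R}:\kappa_\eta(f)<\infty\}$. For $f\in\mathcal S_\eta$, $\eta>1$: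 $\Theta_f(x+iy,\phi;\xi,\zeta)=y^{1/4}e(\zeta-\tfrac12\xi_1\xi_2)\sum_{n\in\mathbb{Z}}f_\phi((n-\xi_2)y^{1/2})e(\tfrac12(n-\xi_2)^2x+n\xi_1)$. *)

theory Defs
  imports "HOL-Analysis.Analysis"
begin

definition ee :: "real \<Rightarrow> complex" where
  "ee t = exp (2 * pi * \<i> * complex_of_real t)"

definition sigma_phi :: "real \<Rightarrow> int" where
  "sigma_phi \<phi> = 2 * \<lfloor>\<phi> / pi\<rfloor> + 1"

definition fphi :: "(real \<Rightarrow> real) \<Rightarrow> real \<Rightarrow> real \<Rightarrow> complex" where
  "fphi f \<phi> w =
    (if \<exists>k::int. \<phi> = 2 * pi * k then complex_of_real (f w)
     else if \<exists>k::int. \<phi> = pi + 2 * pi * k then ee (-1/4) * complex_of_real (f (- w))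
     else ee (- real_of_int (sigma_phi \<phi>) / 8) * complex_of_real (\<bar>sin \<phi>\<bar> powr (-1/2)) *
       integral\<^sup>L lborel (\<lambda>w'. ee (((1/2) * (w\<^sup>2 + w'\<^sup>2) * cos \<phi> - w * w') / sin \<phi>)
                                 * complex_of_real (f w')))"

definition kappa :: "real \<Rightarrow> (real \<Rightarrow> real) \<Rightarrow> real" where
  "kappa \<eta> f = (SUP p \<in> (UNIV :: (real \<times> real) set).
                   cmod (fphi f (snd p) (fst p)) * (1 + \<bar>fst p\<bar>) powr \<eta>)"

text \<open>S_eta(R) = {f : kappa_eta(f) < infinity}\<close>
definition S_eta :: "real \<Rightarrow> (real \<Rightarrow> real) set" where
  "S_eta \<eta> = {f. bdd_above ((\<lambda>p. cmod (fphi f (snd p) (fst p)) * (1 + \<bar>fst p\<bar>) powr \<eta>) ` UNIV)}"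

definition Theta :: "(real \<Rightarrow> real) \<Rightarrow> real \<Rightarrow> real \<Rightarrow> real \<Rightarrow> real \<Rightarrow> real \<Rightarrow> real \<Rightarrow> complex" where
  "Theta f x y \<phi> \<xi>1 \<xi>2 \<zeta> =
     complex_of_real (y powr (1/4)) * ee (\<zeta> - (1/2) * \<xi>1 * \<xi>2) *
     (\<Sum>\<^sub>\<infinity>n::int. fphi f \<phi> ((real_of_int n - \<xi>2) * sqrt y) *
                 ee ((1/2) * (real_of_int n - \<xi>2)\<^sup>2 * x + real_of_int n * \<xi>1))"

end

theory Submission
  imports Defs
begin

text \<open>
  Writing \<open>\<xi>\<^sub>2 = m + \<theta>\<close>, the \<open>n = m\<close> term of the theta series is exactly the main term.
  For \<open>n \<noteq> m\<close> the argument \<open>(n - \<xi>\<^sub>2) y\<^sup>1\<^sup>/\<^sup>2\<close> has modulus at least \<open>|n - m| y\<^sup>1\<^sup>/\<^sup>2 / 2\<close>,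
  so the decay \<open>|f\<^sub>\<phi>(w)| \<le> \<kappa>\<^sub>\<eta>(f) (1 + |w|)\<^sup>-\<^sup>\<eta>\<close> bounds that term by
  \<open>2\<^sup>\<eta> \<kappa>\<^sub>\<eta>(f) y\<^sup>-\<^sup>\<eta>\<^sup>/\<^sup>2 |n - m|\<^sup>-\<^sup>\<eta>\<close>; summing over \<open>n \<noteq> m\<close> (convergent as \<open>\<eta> > 1\<close>) and
  multiplying by the prefactor \<open>y\<^sup>1\<^sup>/\<^sup>4\<close> gives the claimed error \<open>y\<^sup>-\<^sup>(\<^sup>2\<^sup>\<eta>\<^sup>-\<^sup>1\<^sup>)\<^sup>/\<^sup>4\<close>.
\<close>

lemma ee_add: "ee a * ee b = ee (a + b)"
  unfolding ee_def by (simp add: exp_add[symmetric] algebra_simps)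

lemma norm_ee [simp]: "cmod (ee a) = 1"
  unfolding ee_def by (simp add: norm_exp_eq_Re)

lemma summable_on_int_abs_powr:
  assumes "\<eta> > 1"
  shows "(\<lambda>k::int. real_of_int \<bar>k\<bar> powr -\<eta>) summable_on UNIV"
proof -
  have nat: "(\<lambda>n::nat. real n powr -\<eta>) summable_on UNIV"
    using summable_on_UNIV_nonneg_real_iff[of "\<lambda>n::nat. real n powr -\<eta>"]
      summable_real_powr_iff[of "-\<eta>"] assms
    by simp
  have pos: "(\<lambda>k::int. real_of_int \<bar>k\<bar> powr -\<eta>) summable_on range int"
    by (subst summable_on_reindex) (use nat in \<open>auto simp: o_def\<close>)
  have neg: "(\<lambda>k::int. real_of_int \<bar>k\<bar> powr -\<eta>) summable_on range (\<lambda>n. - int n)"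
    by (subst summable_on_reindex) (use nat in \<open>auto simp: o_def inj_on_def\<close>)
  have "(UNIV::int set) = range int \<union> range (\<lambda>n. - int n)"
    by (auto intro: int_cases2)
  then show ?thesis
    using summable_on_union[OF pos neg] by simp
qed

lemma norm_infsum_int_minus_term_le:
  fixes G :: "int \<Rightarrow> 'a::banach"
  assumes "\<eta> > 1"
    and decay: "\<And>n. n \<noteq> m \<Longrightarrow> norm (G n) \<le> c * real_of_int \<bar>n - m\<bar> powr -\<eta>"
  shows "norm (infsum G UNIV - G m) \<le> c * (\<Sum>\<^sub>\<infinity>k::int. real_of_int \<bar>k\<bar> powr -\<eta>)"
proof -
  define q where "q n = real_of_int \<bar>n - m\<bar> powr -\<eta>" for n
  have shift: "bij_betw (\<lambda>n::int. n - m) UNIV UNIV"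
    unfolding bij_betw_def inj_on_def by (auto intro!: image_eqI[where x="_ + m"])
  have q_summable: "q summable_on UNIV"
    unfolding q_def
    using summable_on_reindex_bij_betw[OF shift, of "\<lambda>k. real_of_int \<bar>k\<bar> powr -\<eta>"]
      summable_on_int_abs_powr[OF assms(1)]
    by simp
  have "infsum q UNIV = (\<Sum>\<^sub>\<infinity>k::int. real_of_int \<bar>k\<bar> powr -\<eta>)"
    unfolding q_def
    using infsum_reindex_bij_betw[OF shift, of "\<lambda>k. real_of_int \<bar>k\<bar> powr -\<eta>"] by simp
  moreover have "infsum q UNIV = infsum q (UNIV - {m})"
    using infsum_insert[OF summable_on_subset[OF q_summable], of "UNIV - {m}" m]
    by (simp add: q_def insert_absorb)
  ultimately have q_infsum: "infsum q (UNIV - {m}) = (\<Sum>\<^sub>\<infinity>k::int. real_of_int \<bar>k\<bar> powr -\<eta>)"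
    by simp
  have cq: "(\<lambda>n. c * q n) summable_on (UNIV - {m})"
    by (intro summable_on_cmult_right summable_on_subset[OF q_summable]) auto
  have G_abs: "(\<lambda>n. norm (G n)) summable_on (UNIV - {m})"
    by (rule summable_on_comparison_test[OF cq]) (use decay in \<open>auto simp: q_def\<close>)
  have "infsum G UNIV = G m + infsum G (UNIV - {m})"
    using infsum_insert[OF abs_summable_summable[OF G_abs], of m] by (simp add: insert_absorb)
  then have "norm (infsum G UNIV - G m) = norm (infsum G (UNIV - {m}))"
    by simp
  also have "\<dots> \<le> infsum (\<lambda>n. norm (G n)) (UNIV - {m})"
    by (rule norm_infsum_bound[OF G_abs])
  also have "\<dots> \<le> infsum (\<lambda>n. c * q n) (UNIV - {m})"
    by (rule infsum_mono[OF G_abs cq]) (use decay in \<open>auto simp: q_def\<close>)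
  also have "\<dots> = c * (\<Sum>\<^sub>\<infinity>k::int. real_of_int \<bar>k\<bar> powr -\<eta>)"
    using q_infsum by (simp add: infsum_cmult_right')
  finally show ?thesis .
qed

lemma fphi_weighted_le_kappa:
  assumes "f \<in> S_eta \<eta>"
  shows "cmod (fphi f \<phi> w) * (1 + \<bar>w\<bar>) powr \<eta> \<le> kappa \<eta> f"
  using assms unfolding kappa_def S_eta_def
  by (intro cSUP_upper2[where x="(w, \<phi>)"]) auto

lemma norm_fphi_le_kappa_powr:
  assumes "f \<in> S_eta \<eta>" "\<eta> \<ge> 0" "0 < a" "a \<le> \<bar>w\<bar>"
  shows "cmod (fphi f \<phi> w) \<le> kappa \<eta> f * a powr -\<eta>"
proof -
  have "cmod (fphi f \<phi> w) * a powr \<eta> \<le> cmod (fphi f \<phi> w) * (1 + \<bar>w\<bar>) powr \<eta>"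
    using assms(2-4) by (intro mult_left_mono powr_mono2) auto
  also have "\<dots> \<le> kappa \<eta> f"
    by (rule fphi_weighted_le_kappa[OF assms(1)])
  finally show ?thesis
    using assms(3) by (simp add: powr_minus field_simps)
qed

lemma norm_fphi_lattice_le:
  assumes "f \<in> S_eta \<eta>" "\<eta> \<ge> 0" "y > 0" "\<bar>\<theta>\<bar> \<le> 1/2" "n \<noteq> m"
  shows "cmod (fphi f \<phi> ((real_of_int n - (real_of_int m + \<theta>)) * sqrt y))
           \<le> 2 powr \<eta> * kappa \<eta> f * y powr (-\<eta>/2) * real_of_int \<bar>n - m\<bar> powr -\<eta>"
proof -
  define a where "a = real_of_int \<bar>n - m\<bar> * (sqrt y / 2)"
  have "real_of_int \<bar>n - m\<bar> \<ge> 1"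
    using assms(5) by linarith
  then have "a > 0" and "real_of_int \<bar>n - m\<bar> / 2 \<le> \<bar>real_of_int n - (real_of_int m + \<theta>)\<bar>"
    using assms(3,4) by (auto simp: a_def abs_if split: if_splits)
  then have "cmod (fphi f \<phi> ((real_of_int n - (real_of_int m + \<theta>)) * sqrt y))
               \<le> kappa \<eta> f * a powr -\<eta>"
    using assms(1-3) by (intro norm_fphi_le_kappa_powr) (auto simp: a_def abs_mult)
  also have "a powr -\<eta> = 2 powr \<eta> * y powr (-\<eta>/2) * real_of_int \<bar>n - m\<bar> powr -\<eta>"
    using assms(3)
    by (simp add: a_def powr_mult powr_divide powr_minus_divide powr_half_sqrt[symmetric]
                  powr_powr field_simps)
  finally show ?thesis
    by (simp add: mult_ac)
qed

lemma theta_phase_at_nearest_integer: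
  assumes "\<xi>2 = real_of_int m + \<theta>"
  shows "ee (\<zeta> - (1/2) * \<xi>1 * \<xi>2) * ee ((1/2) * (real_of_int m - \<xi>2)\<^sup>2 * x + real_of_int m * \<xi>1)
           = ee (\<zeta> + ((real_of_int m - \<theta>) * \<xi>1 + \<theta>\<^sup>2 * x) / 2)"
  unfolding ee_add assms by (rule arg_cong[where f=ee]) (simp add: power2_eq_square field_simps)

theorem lemma2p1:
  fixes \<eta> :: real
  assumes "\<eta> > 1"
  shows "\<exists>C::real. \<forall>f \<in> S_eta \<eta>. \<forall>y x \<phi> \<xi>1 \<xi>2 \<zeta> :: real. \<forall>(m::int) (\<theta>::real).
           y \<ge> 1/2 \<and> \<xi>2 = real_of_int m + \<theta> \<and> -1/2 \<le> \<theta> \<and> \<theta> < 1/2 \<longrightarrow>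
           cmod (Theta f x y \<phi> \<xi>1 \<xi>2 \<zeta>
                 - complex_of_real (y powr (1/4))
                   * ee (\<zeta> + ((real_of_int m - \<theta>) * \<xi>1 + \<theta>\<^sup>2 * x) / 2)
                   * fphi f \<phi> (- \<theta> * sqrt y))
           \<le> C * kappa \<eta> f * y powr (- (2 * \<eta> - 1) / 4)"
proof (intro exI[of _ "2 powr \<eta> * (\<Sum>\<^sub>\<infinity>k::int. real_of_int \<bar>k\<bar> powr -\<eta>)"] ballI allI impI,
       elim conjE)
  fix f and y x \<phi> \<xi>1 \<xi>2 \<zeta> \<theta> :: real and m :: int
  assume f: "f \<in> S_eta \<eta>" and y: "y \<ge> 1/2" and \<xi>2: "\<xi>2 = real_of_int m + \<theta>"
    and "-1/2 \<le> \<theta>" "\<theta> < 1/2"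
  define S where "S = (\<Sum>\<^sub>\<infinity>k::int. real_of_int \<bar>k\<bar> powr -\<eta>)"
  define G where "G n = fphi f \<phi> ((real_of_int n - \<xi>2) * sqrt y) *
                   ee ((1/2) * (real_of_int n - \<xi>2)\<^sup>2 * x + real_of_int n * \<xi>1)" for n :: int
  have "norm (G n) \<le> 2 powr \<eta> * kappa \<eta> f * y powr (-\<eta>/2) * real_of_int \<bar>n - m\<bar> powr -\<eta>"
    if "n \<noteq> m" for n
    using norm_fphi_lattice_le[OF f _ _ _ that, of y \<theta> \<phi>] assms y \<open>-1/2 \<le> \<theta>\<close> \<open>\<theta> < 1/2\<close>
    by (simp add: G_def \<xi>2 norm_mult)
  then have remainder: "norm (infsum G UNIV - G m) \<le> 2 powr \<eta> * kappa \<eta> f * y powr (-\<eta>/2) * S"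
    unfolding S_def by (rule norm_infsum_int_minus_term_le[OF assms])
  have "Theta f x y \<phi> \<xi>1 \<xi>2 \<zeta>
          - complex_of_real (y powr (1/4))
            * ee (\<zeta> + ((real_of_int m - \<theta>) * \<xi>1 + \<theta>\<^sup>2 * x) / 2)
            * fphi f \<phi> (- \<theta> * sqrt y)
        = complex_of_real (y powr (1/4)) * ee (\<zeta> - (1/2) * \<xi>1 * \<xi>2) * (infsum G UNIV - G m)"
    (is "?D = _")
    using theta_phase_at_nearest_integer[OF \<xi>2, of \<zeta> \<xi>1 x]
    by (simp add: Theta_def G_def[abs_def] \<xi>2 algebra_simps)
  then have "cmod ?D = y powr (1/4) * norm (infsum G UNIV - G m)"
    by (simp add: norm_mult)
  also have "\<dots> \<le> y powr (1/4) * (2 powr \<eta> * kappa \<eta> f * y powr (-\<eta>/2) * S)"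
    using remainder by (rule mult_left_mono) simp
  also have "\<dots> = 2 powr \<eta> * S * kappa \<eta> f * (y powr (1/4) * y powr (-\<eta>/2))"
    by (simp add: mult_ac)
  also have "y powr (1/4) * y powr (-\<eta>/2) = y powr (- (2 * \<eta> - 1) / 4)"
    using y by (simp add: powr_add[symmetric] field_simps)
  finally show "cmod ?D \<le> 2 powr \<eta> * S * kappa \<eta> f * y powr (- (2 * \<eta> - 1) / 4)" .
qed

end
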